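(* Let $\Gamma=([n],w)$ be a connected hypergraph with non-negative weights. Then the $\mathrm{U}(n)$-spectrum of $\Gamma$ has a positive spectral gap: there exists $\varepsilon>0$ such that $\lambda_{\min}(\Gamma,\rho)\ge\varepsilon$ for every non-trivial irreducible representation $\rho$ of $\mathrm{U}(n)$ (equivalently, ${\cal L}(\Gamma)\ge\varepsilon(I-P_{[n]})$ on $L^2(\mathrm{U}(n))$).
   Context: A weighted hypergraph $\Gamma=([n],w)$ assigns $w_B\ge0$ to every $B\subseteq[n]$; it is connected if there is no partition $[n]=E_1\sqcup E_2$ into nonempty sets such that every $B$ with $w_B>0$ lies in $E_1$ or in $E_2$. $\mathrm{U}_B\le\mathrm{U}(n)$ is the subgroup of unitaries coinciding with the identity outside the minor indexed by $B$, with Haar probability $\mu_B$. For a (possibly infinite-dimensional unitary) representation $\rho$, ${\cal L}(\Gamma,\rho)=\sum_Bw_B[I-\int_{\mathrm{U}_B}\rho(A)d\mu_B(A)]$; $\lambda_{\min}(\Gamma,\rho)$ is the smallest eigenvalue for finite-dimensional $\rho$; ${\cal L}(\Gamma)$ is the operator on the regular representation $L^2(\mathrm{U}(n))$, and $P_{[n]}$ is the projection onto constant functions. *)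

theory Defs
  imports "HOL-Probability.Probability"
begin

text \<open>Matrices in U(n) are complex n x n matrices indexed by a finite type 'n
  (n = CARD('n)); the vertex set [n] of the hypergraph is UNIV :: 'n set.\<close>

definition cadj :: "complex^'n^'n \<Rightarrow> complex^'n^'n" where
  "cadj A = (\<chi> i j. cnj (A $ j $ i))"

definition unitary_group :: "(complex^'n^'n) set" where
  "unitary_group = {A. cadj A ** A = mat 1 \<and> A ** cadj A = mat 1}"

definition U_sub :: "'n set \<Rightarrow> (complex^'n^'n::finite) set" where
  "U_sub B = {A \<in> unitary_group.
      \<forall>i j. (i \<notin> B \<or> j \<notin> B) \<longrightarrow> A $ i $ j = (if i = j then 1 else 0)}"

definition haar_prob :: "(complex^'n^'n) set \<Rightarrow> (complex^'n^'n::finite) measure \<Rightarrow> bool" where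
  "haar_prob G \<mu> \<longleftrightarrow> prob_space \<mu> \<and> space \<mu> = G \<and> sets \<mu> = sets (restrict_space borel G) \<and>
     (\<forall>g\<in>G. \<forall>X\<in>sets \<mu>. (\<lambda>A. g ** A) ` X \<in> sets \<mu> \<and>
        emeasure \<mu> ((\<lambda>A. g ** A) ` X) = emeasure \<mu> X)"

definition hypergraph_connected :: "('n set \<Rightarrow> real) \<Rightarrow> bool" where
  "hypergraph_connected w \<longleftrightarrow>
     \<not> (\<exists>E1 E2. E1 \<noteq> {} \<and> E2 \<noteq> {} \<and> E1 \<inter> E2 = {} \<and> E1 \<union> E2 = UNIV \<and>
                (\<forall>B. w B > 0 \<longrightarrow> B \<subseteq> E1 \<or> B \<subseteq> E2))"

type_synonym cmat = "nat \<Rightarrow> nat \<Rightarrow> complex"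
type_synonym cvect = "nat \<Rightarrow> complex"

definition cvec :: "nat \<Rightarrow> cvect set" where
  "cvec d = {v. \<forall>i\<ge>d. v i = 0}"

definition mat_vec :: "nat \<Rightarrow> cmat \<Rightarrow> cvect \<Rightarrow> cvect" where
  "mat_vec d M v = (\<lambda>i. if i < d then (\<Sum>j<d. M i j * v j) else 0)"

definition mat_mul :: "nat \<Rightarrow> cmat \<Rightarrow> cmat \<Rightarrow> cmat" where
  "mat_mul d M N = (\<lambda>i j. \<Sum>k<d. M i k * N k j)"

definition id_mat :: "cmat" where
  "id_mat = (\<lambda>i j. if i = j then 1 else 0)"

definition unitary_mat :: "nat \<Rightarrow> cmat \<Rightarrow> bool" where
  "unitary_mat d M \<longleftrightarrow>
     (\<forall>i<d. \<forall>j<d. (\<Sum>k<d. cnj (M k i) * M k j) = id_mat i j) \<and>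
     (\<forall>i<d. \<forall>j<d. (\<Sum>k<d. M i k * cnj (M j k)) = id_mat i j)"

definition unitary_rep :: "nat \<Rightarrow> (complex^'n^'n \<Rightarrow> cmat) \<Rightarrow> bool" where
  "unitary_rep d \<rho> \<longleftrightarrow> d > 0 \<and>
     (\<forall>A\<in>unitary_group. unitary_mat d (\<rho> A)) \<and>
     (\<forall>A\<in>unitary_group. \<forall>B\<in>unitary_group. \<forall>i<d. \<forall>j<d.
        \<rho> (A ** B) i j = mat_mul d (\<rho> A) (\<rho> B) i j) \<and>
     (\<forall>i<d. \<forall>j<d. continuous_on unitary_group (\<lambda>A. \<rho> A i j))"

definition csubspace_of :: "nat \<Rightarrow> cvect set \<Rightarrow> bool" where
  "csubspace_of d W \<longleftrightarrow> W \<subseteq> cvec d \<and> (\<lambda>_. 0) \<in> W \<and>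
     (\<forall>v\<in>W. \<forall>u\<in>W. (\<lambda>i. v i + u i) \<in> W) \<and> (\<forall>c. \<forall>v\<in>W. (\<lambda>i. c * v i) \<in> W)"

definition irreducible_rep :: "nat \<Rightarrow> (complex^'n^'n \<Rightarrow> cmat) \<Rightarrow> bool" where
  "irreducible_rep d \<rho> \<longleftrightarrow> unitary_rep d \<rho> \<and>
     (\<forall>W. csubspace_of d W \<and> (\<forall>A\<in>unitary_group. \<forall>v\<in>W. mat_vec d (\<rho> A) v \<in> W)
          \<longrightarrow> W = {\<lambda>_. 0} \<or> W = cvec d)"

definition trivial_rep :: "nat \<Rightarrow> (complex^'n^'n \<Rightarrow> cmat) \<Rightarrow> bool" where
  "trivial_rep d \<rho> \<longleftrightarrow> d = 1 \<and> (\<forall>A\<in>unitary_group. \<rho> A 0 0 = 1)"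

definition laplacian :: "('n set \<Rightarrow> real) \<Rightarrow> ('n set \<Rightarrow> (complex^'n^'n::finite) measure)
    \<Rightarrow> (complex^'n^'n \<Rightarrow> cmat) \<Rightarrow> cmat" where
  "laplacian w \<mu> \<rho> = (\<lambda>i j. \<Sum>B\<in>UNIV. complex_of_real (w B) *
       (id_mat i j - (\<integral>A. \<rho> A i j \<partial>(\<mu> B))))"

definition is_eigenvalue :: "nat \<Rightarrow> cmat \<Rightarrow> complex \<Rightarrow> bool" where
  "is_eigenvalue d M k \<longleftrightarrow> (\<exists>v\<in>cvec d. v \<noteq> (\<lambda>_. 0) \<and> mat_vec d M v = (\<lambda>i. k * v i))"

text \<open>Smallest eigenvalue (the matrices considered are Hermitian, so all eigenvalues are real).\<close>
definition lambda_min :: "nat \<Rightarrow> cmat \<Rightarrow> real" where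
  "lambda_min d M = Min {x::real. is_eigenvalue d M (complex_of_real x)}"

end

(* Since the hypergraph is connected, every unitary is a product of a bounded number N of
   elements of the subgroups U_B with w_B > 0: growing a coordinate set S along an edge
   meeting S and its complement, U_(S+k) = U_S U_(j,k) U_S by a Givens rotation argument.
   For a vector v, the displacement D(g) = |v - rho(g) v| is subadditive in g, and on U_B its
   square is at most four times the energy E_B(v) = int |v - rho(A) v|^2 d mu_B, where
   <L v, v> = (1/2) sum_B w_B E_B(v). Hence D^2 <= C N^2 <L v, v> on all of U(n). For a
   nontrivial irreducible rho the average of rho over U(n) vanishes, so the energy over U(n)
   is 2 |v|^2, and averaging gives |v|^2 <= C' <L v, v> with C' independent of rho. *)

theory Submission
  imports Defs "Jordan_Normal_Form.Spectral_Radius"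
begin

(* Jordan_Normal_Form, needed for the spectrum of a matrix, also writes vector indexing as $. *)
no_notation Matrix.vec_index (infixl "$" 100)

abbreviation one_mat :: "complex^'n^'n" where
  "one_mat \<equiv> Finite_Cartesian_Product.mat 1"

lemma one_mat_nth [simp]: "(one_mat :: complex^'n^'n) $ i $ j = (if i = j then 1 else 0)"
  by (simp add: Finite_Cartesian_Product.mat_def)

lemma matrix_matrix_mult_nth: "(A ** B) $ i $ j = (\<Sum>k\<in>UNIV. A $ i $ k * B $ k $ j)"
  by (simp add: matrix_matrix_mult_def)

lemma matrix_vector_mult_nth: "(A *v x) $ i = (\<Sum>k\<in>UNIV. A $ i $ k * x $ k)"
  by (simp add: matrix_vector_mult_def)

lemma cadj_nth [simp]: "cadj A $ i $ j = cnj (A $ j $ i)"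
  by (simp add: cadj_def)

lemma cadj_mult: "cadj (A ** B) = cadj B ** cadj (A :: complex^'n^'n)"
  by (simp add: Finite_Cartesian_Product.vec_eq_iff matrix_matrix_mult_nth mult.commute)

lemma cadj_cadj [simp]: "cadj (cadj A) = A"
  by (simp add: Finite_Cartesian_Product.vec_eq_iff)

lemma cadj_one_mat [simp]: "cadj (one_mat :: complex^'n^'n) = one_mat"
  by (simp add: Finite_Cartesian_Product.vec_eq_iff)

lemma cadj_mult_cancel_left:
  "cadj A ** A = one_mat \<Longrightarrow> cadj A ** (A ** X) = (X :: complex^'n^'n)"
  by (simp add: matrix_mul_assoc)

lemma unitary_column_norm:
  assumes "cadj A ** A = one_mat"
  shows "(\<Sum>i\<in>UNIV. (cmod (A $ i $ k))\<^sup>2) = 1"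
proof -
  have "complex_of_real (\<Sum>i\<in>UNIV. (cmod (A $ i $ k))\<^sup>2) = (cadj A ** A) $ k $ k"
    unfolding of_real_sum complex_norm_square by (simp add: matrix_matrix_mult_nth mult.commute)
  also have "\<dots> = 1" using assms by simp
  finally show ?thesis by (simp only: of_real_eq_1_iff)
qed

lemma unitary_row_norm:
  assumes "A ** cadj A = one_mat"
  shows "(\<Sum>l\<in>UNIV. (cmod (A $ k $ l))\<^sup>2) = 1"
proof -
  have "complex_of_real (\<Sum>l\<in>UNIV. (cmod (A $ k $ l))\<^sup>2) = (A ** cadj A) $ k $ k"
    unfolding of_real_sum complex_norm_square by (simp add: matrix_matrix_mult_nth)
  also have "\<dots> = 1" using assms by simp
  finally show ?thesis by (simp only: of_real_eq_1_iff)
qed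

definition identity_outside :: "'n set \<Rightarrow> complex^'n^'n \<Rightarrow> bool" where
  "identity_outside K A \<longleftrightarrow> (\<forall>i j. (i \<notin> K \<or> j \<notin> K) \<longrightarrow> A $ i $ j = (if i = j then 1 else 0))"

lemma U_sub_iff:
  "A \<in> U_sub B \<longleftrightarrow> cadj A ** A = one_mat \<and> A ** cadj A = one_mat \<and> identity_outside B A"
  by (simp add: U_sub_def unitary_group_def identity_outside_def)

lemma identity_outside_cadj: "identity_outside K A \<Longrightarrow> identity_outside K (cadj A)"
  by (auto simp: identity_outside_def)

lemma identity_outside_mult_nth:
  assumes A: "identity_outside K A" and C: "identity_outside K C"
  shows "(A ** C) $ i $ j =
    (if i \<in> K \<and> j \<in> K then (\<Sum>m\<in>K. A $ i $ m * C $ m $ j) else if i = j then 1 else 0)"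
proof -
  consider "i \<in> K" "j \<in> K" | "i \<notin> K" | "i \<in> K" "j \<notin> K" by blast
  then show ?thesis
  proof cases
    case 1
    have "(\<Sum>m\<in>UNIV. A $ i $ m * C $ m $ j) = (\<Sum>m\<in>K. A $ i $ m * C $ m $ j)"
      by (rule sum.mono_neutral_right) (use A 1 in \<open>auto simp: identity_outside_def\<close>)
    then show ?thesis using 1 by (simp add: matrix_matrix_mult_nth)
  next
    case 2
    have "(A ** C) $ i $ j = (\<Sum>m\<in>UNIV. if m = i then C $ m $ j else 0)"
      unfolding matrix_matrix_mult_nth by (rule sum.cong) (use A 2 in \<open>auto simp: identity_outside_def\<close>)
    then show ?thesis using C 2 by (simp add: identity_outside_def)
  next
    case 3
    have "(A ** C) $ i $ j = (\<Sum>m\<in>UNIV. if m = j then A $ i $ m else 0)"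
      unfolding matrix_matrix_mult_nth by (rule sum.cong) (use C 3 in \<open>auto simp: identity_outside_def\<close>)
    then show ?thesis using A 3 by (auto simp: identity_outside_def)
  qed
qed

lemma identity_outside_mult:
  "identity_outside K A \<Longrightarrow> identity_outside K C \<Longrightarrow> identity_outside K (A ** C)"
  by (auto simp: identity_outside_def identity_outside_mult_nth)

lemma identity_outside_pair_eq_one_mat:
  assumes "identity_outside {p, q} M"
    and "M $ p $ p = 1" "M $ p $ q = 0" "M $ q $ p = 0" "M $ q $ q = 1"
  shows "M = one_mat"
proof -
  have "M $ i $ j = (if i = j then 1 else 0)" for i j
    using assms unfolding identity_outside_def
    by (cases "i = p"; cases "j = p"; cases "i = q"; cases "j = q") auto
  then show ?thesis by (simp add: Finite_Cartesian_Product.vec_eq_iff)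
qed

lemma identity_outside_mult_vec_nth:
  assumes "identity_outside K A"
  shows "(A *v x) $ i = (if i \<in> K then (\<Sum>m\<in>K. A $ i $ m * x $ m) else x $ i)"
proof (cases "i \<in> K")
  case True
  have "(\<Sum>m\<in>UNIV. A $ i $ m * x $ m) = (\<Sum>m\<in>K. A $ i $ m * x $ m)"
    by (rule sum.mono_neutral_right) (use assms True in \<open>auto simp: identity_outside_def\<close>)
  then show ?thesis using True by (simp add: matrix_vector_mult_nth)
next
  case False
  have "(A *v x) $ i = (\<Sum>m\<in>UNIV. if m = i then x $ m else 0)"
    unfolding matrix_vector_mult_nth
    by (rule sum.cong) (use assms False in \<open>auto simp: identity_outside_def\<close>)
  then show ?thesis using False by simp
qed

lemma one_mat_in_U_sub: "one_mat \<in> U_sub B"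
  by (simp add: U_sub_iff identity_outside_def)

lemma identity_outside_mono: "identity_outside B A \<Longrightarrow> B \<subseteq> C \<Longrightarrow> identity_outside C A"
  unfolding identity_outside_def by blast

lemma U_sub_mono: "B \<subseteq> C \<Longrightarrow> U_sub B \<subseteq> U_sub C"
  by (auto simp: U_sub_iff intro: identity_outside_mono)

lemma U_sub_UNIV: "U_sub UNIV = unitary_group"
  by (simp add: U_sub_def)

lemma U_sub_subset_unitary_group: "U_sub B \<subseteq> unitary_group"
  using U_sub_mono[of B UNIV] by (simp add: U_sub_UNIV)

lemma cadj_in_U_sub: "A \<in> U_sub B \<Longrightarrow> cadj A \<in> U_sub B"
  by (auto simp: U_sub_iff identity_outside_cadj matrix_mul_assoc)

lemma mult_in_U_sub:
  assumes "A \<in> U_sub B" "C \<in> U_sub B"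
  shows "A ** C \<in> U_sub B"
proof -
  have u: "cadj A ** A = one_mat" "A ** cadj A = one_mat" "cadj C ** C = one_mat" "C ** cadj C = one_mat"
    using assms by (auto simp: U_sub_iff)
  have "cadj (A ** C) ** (A ** C) = one_mat"
    by (simp add: cadj_mult matrix_mul_assoc[symmetric] cadj_mult_cancel_left u)
  moreover have "(A ** C) ** cadj (A ** C) = A ** ((C ** cadj C) ** cadj A)"
    by (simp add: cadj_mult matrix_mul_assoc)
  moreover have "identity_outside B (A ** C)"
    using assms unfolding U_sub_iff by (auto intro: identity_outside_mult)
  ultimately show ?thesis by (simp add: U_sub_iff u)
qed

section \<open>Generating \<open>U(n)\<close> from a connected hypergraph\<close>

definition givens_rotation :: "'n \<Rightarrow> 'n \<Rightarrow> complex \<Rightarrow> complex \<Rightarrow> complex^'n^'n" where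
  "givens_rotation p q a b = (\<chi> i l.
     if i = p then (if l = p then b else if l = q then - a else 0)
     else if i = q then (if l = p then cnj a else if l = q then cnj b else 0)
     else if i = l then 1 else 0)"

lemma givens_rotation_in_U_sub:
  assumes pq: "p \<noteq> q" and ab: "cnj a * a + cnj b * b = 1"
  shows "givens_rotation p q a b \<in> U_sub {p, q}"
proof -
  let ?c = "givens_rotation p q a b"
  have c: "identity_outside {p, q} ?c"
    using pq by (auto simp: identity_outside_def givens_rotation_def)
  have c': "identity_outside {p, q} (cadj ?c)"
    using c by (rule identity_outside_cadj)
  have sum_pq: "(\<Sum>m\<in>{p, q}. f m) = f p + f q" for f :: "_ \<Rightarrow> complex"
    using pq by simp
  have entries: "?c $ p $ p = b" "?c $ p $ q = - a" "?c $ q $ p = cnj a" "?c $ q $ q = cnj b"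
    using pq by (simp_all add: givens_rotation_def)
  have "cadj ?c ** ?c = one_mat"
    by (rule identity_outside_pair_eq_one_mat[OF identity_outside_mult[OF c' c]])
      (use pq ab in \<open>simp_all add: identity_outside_mult_nth[OF c' c] sum_pq entries algebra_simps\<close>)
  moreover have "?c ** cadj ?c = one_mat"
    by (rule identity_outside_pair_eq_one_mat[OF identity_outside_mult[OF c c']])
      (use pq ab in \<open>simp_all add: identity_outside_mult_nth[OF c c'] sum_pq entries algebra_simps\<close>)
  ultimately show ?thesis using c by (simp add: U_sub_iff)
qed

lemma givens_rotation_eliminates:
  fixes y :: "complex^'n"
  assumes pq: "p \<noteq> q"
  shows "\<exists>c\<in>U_sub {p, q}. (c *v y) $ p = 0 \<and>
           (c *v y) $ q = complex_of_real (sqrt ((cmod (y $ p))\<^sup>2 + (cmod (y $ q))\<^sup>2))"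
proof (cases "y $ p = 0 \<and> y $ q = 0")
  case True
  then show ?thesis by (intro bexI[of _ one_mat]) (auto simp: one_mat_in_U_sub)
next
  case False
  define r where "r = sqrt ((cmod (y $ p))\<^sup>2 + (cmod (y $ q))\<^sup>2)"
  have pos: "(cmod (y $ p))\<^sup>2 + (cmod (y $ q))\<^sup>2 > 0"
    using False by (subst sum_power2_gt_zero_iff) simp
  then have "r > 0" unfolding r_def by (rule real_sqrt_gt_zero)
  then have r0: "complex_of_real r \<noteq> 0" by simp
  have rr: "complex_of_real r * complex_of_real r = y $ p * cnj (y $ p) + y $ q * cnj (y $ q)"
    using pos unfolding r_def of_real_mult[symmetric] complex_norm_square[symmetric]
    by simp
  define a where "a = y $ p / complex_of_real r"
  define b where "b = y $ q / complex_of_real r"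
  let ?c = "givens_rotation p q a b"
  have "cnj a * a + cnj b * b = (y $ p * cnj (y $ p) + y $ q * cnj (y $ q)) / (complex_of_real r * complex_of_real r)"
    by (simp add: a_def b_def field_simps) (simp add: add_divide_distrib)
  also have "\<dots> = 1" using r0 by (simp add: rr[symmetric])
  finally have c: "?c \<in> U_sub {p, q}" by (rule givens_rotation_in_U_sub[OF pq])
  then have "identity_outside {p, q} ?c" by (simp add: U_sub_iff)
  then have cy: "(?c *v y) $ i = ?c $ i $ p * y $ p + ?c $ i $ q * y $ q" if "i \<in> {p, q}" for i
    using that pq by (simp add: identity_outside_mult_vec_nth)
  have "(?c *v y) $ p = 0"
    using cy[of p] pq by (simp add: givens_rotation_def a_def b_def field_simps)
  moreover have "(?c *v y) $ q = complex_of_real r"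
  proof -
    have "(?c *v y) $ q = cnj a * y $ p + cnj b * y $ q"
      using cy[of q] pq by (simp add: givens_rotation_def)
    also have "\<dots> = (y $ p * cnj (y $ p) + y $ q * cnj (y $ q)) / complex_of_real r"
      by (simp add: a_def b_def add_divide_distrib mult.commute)
    also have "\<dots> = complex_of_real r"
      using r0 by (simp add: rr[symmetric])
    finally show ?thesis .
  qed
  ultimately show ?thesis using c unfolding r_def by blast
qed

lemma U_sub_eliminates_coordinates:
  fixes y :: "complex^'n"
  assumes "finite T" "j \<notin> T" "T \<subseteq> S" "j \<in> S"
  shows "\<exists>h\<in>U_sub S. \<forall>i\<in>T. (h *v y) $ i = 0"
  using assms
proof (induction T rule: finite_induct)
  case empty
  then show ?case using one_mat_in_U_sub by blast
next
  case (insert t T)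
  then obtain h where h: "h \<in> U_sub S" "\<forall>i\<in>T. (h *v y) $ i = 0" by auto
  have "t \<noteq> j" using insert.prems by auto
  then obtain c where c: "c \<in> U_sub {t, j}" "(c *v (h *v y)) $ t = 0"
    using givens_rotation_eliminates[of t j "h *v y"] by blast
  have "{t, j} \<subseteq> S" using insert.prems by auto
  then have cS: "c \<in> U_sub S" using c(1) U_sub_mono by blast
  have ctj: "identity_outside {t, j} c" using c(1) by (simp add: U_sub_iff)
  have "((c ** h) *v y) $ i = 0" if "i \<in> insert t T" for i
  proof (cases "i = t")
    case False
    then have "i \<in> T" "i \<notin> {t, j}" using that insert.prems by auto
    then show ?thesis
      using h(2) by (simp add: identity_outside_mult_vec_nth[OF ctj] flip: matrix_vector_mul_assoc)
  qed (use c in \<open>simp flip: matrix_vector_mul_assoc\<close>)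
  then show ?case using mult_in_U_sub[OF cS h(1)] by blast
qed

lemma U_sub_remove_fixed_coordinate:
  assumes m: "m \<in> U_sub (insert k S)" and col: "\<And>i. m $ i $ k = (if i = k then 1 else 0)"
  shows "m \<in> U_sub S"
proof -
  have "(\<Sum>l\<in>UNIV. (cmod (m $ k $ l))\<^sup>2) = 1"
    using m by (intro unitary_row_norm) (simp add: U_sub_iff)
  moreover have "(\<Sum>l\<in>UNIV. (cmod (m $ k $ l))\<^sup>2) = 1 + (\<Sum>l\<in>UNIV - {k}. (cmod (m $ k $ l))\<^sup>2)"
    using col[of k] by (simp add: sum.remove[of UNIV k])
  ultimately have "\<forall>l\<in>UNIV - {k}. (cmod (m $ k $ l))\<^sup>2 = 0"
    by (simp add: sum_nonneg_eq_0_iff)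
  then have row: "m $ k $ l = (if k = l then 1 else 0)" for l
    using col[of k] by auto
  have "identity_outside (insert k S) m" using m by (simp add: U_sub_iff)
  then have "identity_outside S m"
    unfolding identity_outside_def using row col by (metis insert_iff)
  then show ?thesis using m by (simp add: U_sub_iff)
qed

lemma U_sub_insert_rotate_to_basis:
  fixes u :: "complex^'n"
  assumes jS: "j \<in> S" and kS: "k \<notin> S" and u: "\<And>i. i \<notin> insert k S \<Longrightarrow> u $ i = 0"
  shows "\<exists>h\<in>U_sub S. \<exists>c\<in>U_sub {j, k}. \<exists>r\<ge>0.
           \<forall>i. (c *v (h *v u)) $ i = (if i = k then complex_of_real r else 0)"
proof -
  obtain h where h: "h \<in> U_sub S" "\<forall>i\<in>S - {j}. (h *v u) $ i = 0"
    using U_sub_eliminates_coordinates[of "S - {j}" j S u] jS by auto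
  have "j \<noteq> k" using jS kS by auto
  then obtain c r where c: "c \<in> U_sub {j, k}" "(c *v (h *v u)) $ j = 0"
      "(c *v (h *v u)) $ k = complex_of_real r" and r: "r \<ge> 0"
    using givens_rotation_eliminates[of j k "h *v u"]
    by (metis real_sqrt_ge_zero add_nonneg_nonneg zero_le_power2)
  have "(c *v (h *v u)) $ i = (if i = k then complex_of_real r else 0)" for i
  proof (cases "i = k \<or> i = j")
    case False
    have "identity_outside {j, k} c" "identity_outside S h"
      using c(1) h(1) by (simp_all add: U_sub_iff)
    then have "(c *v (h *v u)) $ i = (h *v u) $ i" "i \<notin> S \<Longrightarrow> (h *v u) $ i = u $ i"
      using False by (simp_all add: identity_outside_mult_vec_nth)
    then show ?thesis using h(2) u False by (cases "i \<in> S") auto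
  qed (use c \<open>j \<noteq> k\<close> in auto)
  then show ?thesis using h(1) c(1) r by blast
qed

text \<open>Rotating the \<open>k\<close>-th column of \<open>g\<close> onto the \<open>k\<close>-th basis vector
  by a factor from \<open>U_S\<close> followed by one from \<open>U_{j,k}\<close> leaves a unitary that fixes that
  basis vector, hence lies in \<open>U_S\<close>.\<close>

lemma U_sub_insert_decomp:
  fixes g :: "complex^'n^'n"
  assumes jS: "j \<in> S" and kS: "k \<notin> S" and g: "g \<in> U_sub (insert k S)"
  shows "\<exists>h c m. h \<in> U_sub S \<and> c \<in> U_sub {j, k} \<and> m \<in> U_sub S \<and> g = h ** c ** m"
proof -
  define u :: "complex^'n" where "u = (\<chi> i. g $ i $ k)"
  have "u $ i = 0" if "i \<notin> insert k S" for i
    using g that by (auto simp: U_sub_iff identity_outside_def u_def)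
  then obtain h c r where h: "h \<in> U_sub S" and c: "c \<in> U_sub {j, k}" and r: "r \<ge> 0"
    and hcu: "\<And>i. (c *v (h *v u)) $ i = (if i = k then complex_of_real r else 0)"
    using U_sub_insert_rotate_to_basis[OF jS kS] by metis
  define m where "m = c ** h ** g"
  have col: "m $ i $ k = (if i = k then complex_of_real r else 0)" for i
    unfolding hcu[symmetric]
    by (simp add: m_def matrix_vector_mul_assoc matrix_matrix_mult_nth matrix_vector_mult_nth u_def)
  have "h \<in> U_sub (insert k S)" "c \<in> U_sub (insert k S)"
    using h c jS U_sub_mono[of S "insert k S"] U_sub_mono[of "{j, k}" "insert k S"] by auto
  then have mk: "m \<in> U_sub (insert k S)"
    unfolding m_def using g by (intro mult_in_U_sub)
  have "(\<Sum>i\<in>UNIV. (cmod (m $ i $ k))\<^sup>2) = 1"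
    using mk by (intro unitary_column_norm) (simp add: U_sub_iff)
  moreover have "(cmod (m $ i $ k))\<^sup>2 = (if i = k then r\<^sup>2 else 0)" for i
    using r by (simp add: col)
  ultimately have "r\<^sup>2 = 1" by simp
  then have "r = 1" using r by (simp add: power2_eq_1_iff)
  then have m: "m \<in> U_sub S"
    using U_sub_remove_fixed_coordinate[OF mk] col by simp
  have "cadj h ** h = one_mat" "cadj c ** c = one_mat"
    using h c by (auto simp: U_sub_iff)
  then have "g = cadj h ** cadj c ** m"
    by (simp add: m_def matrix_mul_assoc[symmetric] cadj_mult_cancel_left)
  then show ?thesis
    using cadj_in_U_sub[OF h] cadj_in_U_sub[OF c] m
    by (intro exI[of _ "cadj h"] exI[of _ "cadj c"] exI[of _ m]) simp
qed

fun hyperedge_products :: "('n::finite set \<Rightarrow> real) \<Rightarrow> nat \<Rightarrow> (complex^'n^'n) set" where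
  "hyperedge_products w 0 = {one_mat}"
| "hyperedge_products w (Suc m) =
     {a ** g | a g B. w B > 0 \<and> a \<in> U_sub B \<and> g \<in> hyperedge_products w m}"

lemma hyperedge_products_mult:
  "g \<in> hyperedge_products w m \<Longrightarrow> g' \<in> hyperedge_products w m' \<Longrightarrow>
     g ** g' \<in> hyperedge_products w (m + m')"
proof (induction m arbitrary: g)
  case (Suc m)
  then obtain a h B where "g = a ** h" "w B > 0" "a \<in> U_sub B" "h \<in> hyperedge_products w m"
    by auto
  with Suc.IH[of h] Suc.prems(2) show ?case
    by (simp flip: matrix_mul_assoc) blast
qed simp

lemma U_sub_subset_hyperedge_products:
  assumes "w B > 0"
  shows "U_sub B \<subseteq> hyperedge_products w 1"
proof
  fix a assume "a \<in> U_sub B"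
  then have "a = a ** one_mat \<and> w B > 0 \<and> a \<in> U_sub B \<and> one_mat \<in> hyperedge_products w 0"
    using assms by simp
  then show "a \<in> hyperedge_products w 1"
    by (simp only: One_nat_def hyperedge_products.simps) blast
qed

lemma hyperedge_products_subset_unitary_group:
  "hyperedge_products w m \<subseteq> unitary_group"
proof (induction m)
  case (Suc m)
  show ?case
  proof
    fix x assume "x \<in> hyperedge_products w (Suc m)"
    then obtain a g B where "x = a ** g" "a \<in> U_sub B" "g \<in> hyperedge_products w m"
      by auto
    then show "x \<in> unitary_group"
      using Suc.IH U_sub_mono[of B UNIV] mult_in_U_sub[of a UNIV g] by (auto simp: U_sub_UNIV)
  qed
qed (simp add: one_mat_in_U_sub flip: U_sub_UNIV)

lemma hypergraph_connected_crossing_edge: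
  assumes "hypergraph_connected w" "S \<noteq> {}" "S \<noteq> UNIV"
  shows "\<exists>B. w B > 0 \<and> (\<exists>j\<in>B. j \<in> S) \<and> (\<exists>k\<in>B. k \<notin> S)"
proof (rule ccontr)
  assume "\<not> ?thesis"
  then have "\<forall>B. w B > 0 \<longrightarrow> B \<subseteq> S \<or> B \<subseteq> - S" by blast
  moreover have "- S \<noteq> {}" using assms(3) by auto
  ultimately have "\<exists>E1 E2. E1 \<noteq> {} \<and> E2 \<noteq> {} \<and> E1 \<inter> E2 = {} \<and> E1 \<union> E2 = UNIV \<and>
      (\<forall>B. w B > 0 \<longrightarrow> B \<subseteq> E1 \<or> B \<subseteq> E2)"
    using assms(2) by (intro exI[of _ S] exI[of _ "- S"]) auto
  then show False using assms(1) unfolding hypergraph_connected_def by blast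
qed

lemma hypergraph_connected_edge_containing:
  fixes w :: "'n::finite set \<Rightarrow> real"
  assumes "CARD('n) \<ge> 2" "hypergraph_connected w"
  shows "\<exists>B. w B > 0 \<and> i \<in> B"
proof -
  have "{i} \<noteq> UNIV"
  proof
    assume "{i} = UNIV"
    then have "CARD('n) = card {i}" by simp
    with assms(1) show False by simp
  qed
  then show ?thesis
    using hypergraph_connected_crossing_edge[OF assms(2), of "{i}"] by auto
qed

lemma U_sub_insert_subset_hyperedge_products:
  assumes B: "w B > 0" "j \<in> B" "k \<in> B" and jS: "j \<in> S" and kS: "k \<notin> S"
    and S: "U_sub S \<subseteq> hyperedge_products w N"
  shows "U_sub (insert k S) \<subseteq> hyperedge_products w (N + 1 + N)"
proof
  fix g assume "g \<in> U_sub (insert k S)"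
  then obtain h c m where hcm: "h \<in> U_sub S" "c \<in> U_sub {j, k}" "m \<in> U_sub S" "g = h ** c ** m"
    using U_sub_insert_decomp[OF jS kS] by blast
  have "c \<in> hyperedge_products w 1"
    using hcm(2) U_sub_mono[of "{j, k}" B] U_sub_subset_hyperedge_products[of w B] B by auto
  then show "g \<in> hyperedge_products w (N + 1 + N)"
    using hcm S hyperedge_products_mult by blast
qed

lemma unitary_group_subset_hyperedge_products:
  fixes w :: "'n::finite set \<Rightarrow> real"
  assumes n2: "CARD('n) \<ge> 2" and conn: "hypergraph_connected w"
  shows "\<exists>N. unitary_group \<subseteq> hyperedge_products w N"
proof -
  have grow: "\<exists>S N. card S = Suc m \<and> U_sub S \<subseteq> hyperedge_products w N"
    if "m < CARD('n)" for m
    using that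
  proof (induction m)
    case 0
    obtain i :: 'n where "i \<in> UNIV" by blast
    obtain B where "w B > 0" "i \<in> B"
      using hypergraph_connected_edge_containing[OF n2 conn] by blast
    then have "U_sub {i} \<subseteq> hyperedge_products w 1"
      using U_sub_mono[of "{i}" B] U_sub_subset_hyperedge_products[of w B] by auto
    then show ?case by (intro exI[of _ "{i}"] exI[of _ 1]) simp
  next
    case (Suc m)
    then obtain S N where S: "card S = Suc m" "U_sub S \<subseteq> hyperedge_products w N" by auto
    have "S \<noteq> UNIV" "S \<noteq> {}" using Suc.prems S(1) by auto
    then obtain B j k where B: "w B > 0" "j \<in> B" "j \<in> S" "k \<in> B" "k \<notin> S"
      using hypergraph_connected_crossing_edge[OF conn] by blast
    then have "U_sub (insert k S) \<subseteq> hyperedge_products w (N + 1 + N)"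
      using U_sub_insert_subset_hyperedge_products S(2) by blast
    moreover have "card (insert k S) = Suc (Suc m)"
      using S(1) B(5) by (simp add: card_insert_disjoint)
    ultimately show ?case by blast
  qed
  have "CARD('n) - 1 < CARD('n)" "Suc (CARD('n) - 1) = CARD('n)"
    using n2 by auto
  then obtain S N where "card S = CARD('n)" "U_sub S \<subseteq> hyperedge_products w N"
    using grow by metis
  moreover from this(1) have "S = UNIV" by (simp add: card_eq_UNIV_imp_eq_UNIV)
  ultimately show ?thesis by (auto simp: U_sub_UNIV)
qed

definition cinner :: "nat \<Rightarrow> cvect \<Rightarrow> cvect \<Rightarrow> complex" where
  "cinner d x y = (\<Sum>i<d. x i * cnj (y i))"

definition cnorm_sq :: "nat \<Rightarrow> cvect \<Rightarrow> real" where
  "cnorm_sq d x = (\<Sum>i<d. (cmod (x i))\<^sup>2)"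

definition cnorm :: "nat \<Rightarrow> cvect \<Rightarrow> real" where
  "cnorm d x = L2_set (\<lambda>i. cmod (x i)) {..<d}"

lemma cnorm_sq_nonneg: "cnorm_sq d x \<ge> 0"
  by (simp add: cnorm_sq_def sum_nonneg)

lemma cnorm_nonneg: "cnorm d x \<ge> 0"
  by (simp add: cnorm_def L2_set_nonneg)

lemma cnorm_power2: "(cnorm d x)\<^sup>2 = cnorm_sq d x"
  by (simp add: cnorm_def cnorm_sq_def L2_set_def sum_nonneg)

lemma cinner_self: "cinner d x x = complex_of_real (cnorm_sq d x)"
  by (simp only: cinner_def cnorm_sq_def of_real_sum complex_norm_square)

lemma cinner_commute: "cinner d x y = cnj (cinner d y x)"
  by (simp add: cinner_def mult.commute)

lemma cinner_diff_left: "cinner d (\<lambda>i. x i - y i) z = cinner d x z - cinner d y z"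
  by (simp add: cinner_def sum_subtractf left_diff_distrib)

lemma cinner_diff_right: "cinner d z (\<lambda>i. x i - y i) = cinner d z x - cinner d z y"
  by (simp add: cinner_def sum_subtractf right_diff_distrib)

lemma cinner_scale_left: "cinner d (\<lambda>i. c * x i) z = c * cinner d x z"
  by (simp add: cinner_def sum_distrib_left mult.assoc)

lemma cnorm_sq_eq_0_iff: "cnorm_sq d x = 0 \<longleftrightarrow> (\<forall>i<d. x i = 0)"
  unfolding cnorm_sq_def by (subst sum_nonneg_eq_0_iff) auto

lemma cnorm_sq_pos:
  assumes "v \<in> cvec d" "v \<noteq> (\<lambda>_. 0)"
  shows "cnorm_sq d v > 0"
proof -
  obtain i where "v i \<noteq> 0" using assms(2) by auto
  moreover from this have "i < d" using assms(1) unfolding cvec_def by (metis (mono_tags) mem_Collect_eq not_le)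
  ultimately have "cnorm_sq d v \<noteq> 0" by (auto simp: cnorm_sq_eq_0_iff)
  then show ?thesis using cnorm_sq_nonneg[of d v] by linarith
qed

lemma cnorm_sq_diff:
  "cnorm_sq d (\<lambda>i. x i - y i) = cnorm_sq d x + cnorm_sq d y - 2 * Re (cinner d y x)"
proof -
  have "complex_of_real (cnorm_sq d (\<lambda>i. x i - y i)) = cinner d x x + cinner d y y - cinner d y x - cinner d x y"
    by (simp add: cinner_self[symmetric] cinner_def algebra_simps sum_subtractf sum.distrib)
  also have "\<dots> = complex_of_real (cnorm_sq d x + cnorm_sq d y) - (cinner d y x + cnj (cinner d y x))"
    by (simp add: cinner_self cinner_commute[of d x y])
  also have "\<dots> = complex_of_real (cnorm_sq d x + cnorm_sq d y - 2 * Re (cinner d y x))"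
    by (simp add: complex_add_cnj)
  finally show ?thesis by (simp only: of_real_eq_iff)
qed

lemma cnorm_triangle: "cnorm d (\<lambda>i. x i + y i) \<le> cnorm d x + cnorm d y"
proof -
  have "cnorm d (\<lambda>i. x i + y i) \<le> L2_set (\<lambda>i. cmod (x i) + cmod (y i)) {..<d}"
    unfolding cnorm_def by (rule L2_set_mono) (auto simp: norm_triangle_ineq)
  also have "\<dots> \<le> cnorm d x + cnorm d y"
    unfolding cnorm_def by (rule L2_set_triangle_ineq)
  finally show ?thesis .
qed

lemma cnorm_diff_triangle:
  "cnorm d (\<lambda>i. x i - z i) \<le> cnorm d (\<lambda>i. x i - y i) + cnorm d (\<lambda>i. y i - z i)"
  using cnorm_triangle[of d "\<lambda>i. x i - y i" "\<lambda>i. y i - z i"] by simp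

lemma cnorm_diff_commute: "cnorm d (\<lambda>i. x i - y i) = cnorm d (\<lambda>i. y i - x i)"
  by (simp add: cnorm_def norm_minus_commute)

lemma mat_vec_in_cvec: "mat_vec d M v \<in> cvec d"
  by (simp add: cvec_def mat_vec_def)

lemma mat_vec_diff: "mat_vec d M (\<lambda>i. x i - y i) = (\<lambda>i. mat_vec d M x i - mat_vec d M y i)"
  by (auto simp: mat_vec_def algebra_simps sum_subtractf)

lemma mat_vec_add: "mat_vec d M (\<lambda>i. x i + y i) = (\<lambda>i. mat_vec d M x i + mat_vec d M y i)"
  by (auto simp: mat_vec_def algebra_simps sum.distrib)

lemma mat_vec_scale: "mat_vec d M (\<lambda>i. c * x i) = (\<lambda>i. c * mat_vec d M x i)"
  by (auto simp: mat_vec_def algebra_simps sum_distrib_left)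

lemma mat_vec_zero: "mat_vec d M (\<lambda>_. 0) = (\<lambda>_. 0)"
  by (auto simp: mat_vec_def)

lemma mat_vec_mat_mul: "mat_vec d (mat_mul d M N) v = mat_vec d M (mat_vec d N v)"
proof
  fix i show "mat_vec d (mat_mul d M N) v i = mat_vec d M (mat_vec d N v) i"
  proof (cases "i < d")
    case True
    have "mat_vec d (mat_mul d M N) v i = (\<Sum>j<d. \<Sum>k<d. M i k * N k j * v j)"
      using True by (simp add: mat_vec_def mat_mul_def sum_distrib_right)
    also have "\<dots> = (\<Sum>k<d. \<Sum>j<d. M i k * N k j * v j)" by (rule sum.swap)
    also have "\<dots> = mat_vec d M (mat_vec d N v) i"
      using True by (simp add: mat_vec_def sum_distrib_left mult.assoc)
    finally show ?thesis .
  qed (simp add: mat_vec_def)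
qed

lemma mat_vec_cong:
  "(\<And>i j. i < d \<Longrightarrow> j < d \<Longrightarrow> M i j = N i j) \<Longrightarrow> mat_vec d M v = mat_vec d N v"
  by (auto simp: mat_vec_def)

lemma mat_vec_id_mat:
  assumes "v \<in> cvec d"
  shows "mat_vec d id_mat v = v"
proof
  fix i
  have "(\<Sum>j<d. id_mat i j * v j) = (\<Sum>j<d. if j = i then v i else 0)"
    by (rule sum.cong) (auto simp: id_mat_def)
  then show "mat_vec d id_mat v i = v i" using assms by (simp add: mat_vec_def cvec_def)
qed

lemma cinner_mat_vec_left:
  "cinner d (mat_vec d M x) y = (\<Sum>i<d. \<Sum>j<d. M i j * (x j * cnj (y i)))"
  by (simp add: cinner_def mat_vec_def sum_distrib_right mult.assoc)

lemma unitary_mat_cinner: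
  assumes U: "unitary_mat d M"
  shows "cinner d (mat_vec d M x) (mat_vec d M y) = cinner d x y"
proof -
  have col: "(\<Sum>i<d. cnj (M i k) * M i j) = id_mat k j" if "k < d" "j < d" for k j
    using U that unfolding unitary_mat_def by blast
  have "cinner d (mat_vec d M x) (mat_vec d M y) =
      (\<Sum>i<d. \<Sum>j<d. \<Sum>k<d. M i j * x j * (cnj (M i k) * cnj (y k)))"
    by (simp add: cinner_def mat_vec_def sum_product)
  also have "\<dots> = (\<Sum>j<d. \<Sum>i<d. \<Sum>k<d. M i j * x j * (cnj (M i k) * cnj (y k)))"
    by (rule sum.swap)
  also have "\<dots> = (\<Sum>j<d. \<Sum>k<d. \<Sum>i<d. M i j * x j * (cnj (M i k) * cnj (y k)))"
    by (rule sum.cong[OF refl], rule sum.swap)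
  also have "\<dots> = (\<Sum>j<d. \<Sum>k<d. x j * cnj (y k) * id_mat k j)"
    by (intro sum.cong refl) (simp add: col[symmetric] sum_distrib_left mult_ac)
  also have "\<dots> = cinner d x y"
    by (simp add: cinner_def id_mat_def if_distrib cong: if_cong)
  finally show ?thesis .
qed

lemma unitary_mat_cnorm_sq: "unitary_mat d M \<Longrightarrow> cnorm_sq d (mat_vec d M x) = cnorm_sq d x"
  using unitary_mat_cinner[of d M x x] by (simp add: cinner_self)

lemma unitary_mat_cnorm: "unitary_mat d M \<Longrightarrow> cnorm d (mat_vec d M x) = cnorm d x"
  by (metis cnorm_nonneg cnorm_power2 power2_eq_iff_nonneg unitary_mat_cnorm_sq)

lemma unitary_mat_entry_bound:
  assumes U: "unitary_mat d M" and "i < d" "j < d"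
  shows "cmod (M i j) \<le> 1"
proof -
  have "complex_of_real (\<Sum>k<d. (cmod (M k j))\<^sup>2) = (\<Sum>k<d. cnj (M k j) * M k j)"
    by (simp only: of_real_sum complex_norm_square mult.commute)
  also have "\<dots> = 1"
    using U assms unfolding unitary_mat_def id_mat_def by auto
  finally have "(\<Sum>k<d. (cmod (M k j))\<^sup>2) = 1" by (simp only: of_real_eq_1_iff)
  moreover have "(cmod (M i j))\<^sup>2 \<le> (\<Sum>k<d. (cmod (M k j))\<^sup>2)"
    using assms by (intro member_le_sum) auto
  ultimately show ?thesis by (simp add: power_le_one_iff abs_le_iff)
qed

section \<open>Displacement of a vector under a representation\<close>

lemma unitary_rep_unitary_mat:
  "unitary_rep d \<rho> \<Longrightarrow> A \<in> unitary_group \<Longrightarrow> unitary_mat d (\<rho> A)"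
  by (simp add: unitary_rep_def)

lemma unitary_rep_mult_mat_vec:
  assumes "unitary_rep d \<rho>" "A \<in> unitary_group" "B \<in> unitary_group"
  shows "mat_vec d (\<rho> (A ** B)) v = mat_vec d (\<rho> A) (mat_vec d (\<rho> B) v)"
proof -
  have "mat_vec d (\<rho> (A ** B)) v = mat_vec d (mat_mul d (\<rho> A) (\<rho> B)) v"
    using assms by (intro mat_vec_cong) (simp add: unitary_rep_def)
  then show ?thesis by (simp add: mat_vec_mat_mul)
qed

lemma unitary_rep_one_mat:
  assumes rep: "unitary_rep d \<rho>" and v: "v \<in> cvec d"
  shows "mat_vec d (\<rho> one_mat) v = v"
proof -
  have I: "one_mat \<in> unitary_group"
    using one_mat_in_U_sub by (simp flip: U_sub_UNIV)
  define u where "u = mat_vec d (\<rho> one_mat) v"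
  have "mat_vec d (\<rho> one_mat) u = u"
    using unitary_rep_mult_mat_vec[OF rep I I, of v] by (simp add: u_def)
  then have "cnorm_sq d (mat_vec d (\<rho> one_mat) (\<lambda>i. u i - v i)) = 0"
    by (simp add: mat_vec_diff u_def cnorm_sq_def)
  then have "\<forall>i<d. u i = v i"
    by (simp add: unitary_mat_cnorm_sq[OF unitary_rep_unitary_mat[OF rep I]] cnorm_sq_eq_0_iff)
  moreover have "u i = v i" if "\<not> i < d" for i
    using v that by (simp add: u_def mat_vec_def cvec_def)
  ultimately show ?thesis by (auto simp: u_def)
qed

definition displacement :: "nat \<Rightarrow> (complex^'n^'n \<Rightarrow> cmat) \<Rightarrow> cvect \<Rightarrow> complex^'n^'n \<Rightarrow> real" where
  "displacement d \<rho> v A = cnorm d (\<lambda>i. v i - mat_vec d (\<rho> A) v i)"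

lemma displacement_nonneg: "displacement d \<rho> v A \<ge> 0"
  by (simp add: displacement_def cnorm_nonneg)

lemma displacement_one_mat: "unitary_rep d \<rho> \<Longrightarrow> v \<in> cvec d \<Longrightarrow> displacement d \<rho> v one_mat = 0"
  by (simp add: displacement_def unitary_rep_one_mat cnorm_def L2_set_def)

lemma displacement_power2:
  assumes "unitary_rep d \<rho>" "A \<in> unitary_group"
  shows "(displacement d \<rho> v A)\<^sup>2 = 2 * cnorm_sq d v - 2 * Re (cinner d (mat_vec d (\<rho> A) v) v)"
  using assms unfolding displacement_def cnorm_power2 cnorm_sq_diff
  by (simp add: unitary_mat_cnorm_sq unitary_rep_unitary_mat)

lemma displacement_mult_le:
  assumes rep: "unitary_rep d \<rho>" and A: "A \<in> unitary_group" and B: "B \<in> unitary_group"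
  shows "displacement d \<rho> v (A ** B) \<le> displacement d \<rho> v A + displacement d \<rho> v B"
proof -
  have "cnorm d (\<lambda>i. mat_vec d (\<rho> A) v i - mat_vec d (\<rho> (A ** B)) v i) = displacement d \<rho> v B"
    by (simp add: displacement_def unitary_rep_mult_mat_vec[OF rep A B] mat_vec_diff
        unitary_mat_cnorm[OF unitary_rep_unitary_mat[OF rep A], of "\<lambda>i. v i - mat_vec d (\<rho> B) v i", simplified mat_vec_diff])
  then show ?thesis
    using cnorm_diff_triangle[of d v "mat_vec d (\<rho> (A ** B)) v" "mat_vec d (\<rho> A) v"]
    by (simp add: displacement_def)
qed

lemma displacement_le_mult:
  assumes rep: "unitary_rep d \<rho>" and A: "A \<in> unitary_group" and B: "B \<in> unitary_group"
  shows "displacement d \<rho> v A \<le> displacement d \<rho> v (A ** B) + displacement d \<rho> v B"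
proof -
  have "cnorm d (\<lambda>i. mat_vec d (\<rho> (A ** B)) v i - mat_vec d (\<rho> A) v i) = displacement d \<rho> v B"
    by (simp add: displacement_def unitary_rep_mult_mat_vec[OF rep A B] cnorm_diff_commute[of d v]
        unitary_mat_cnorm[OF unitary_rep_unitary_mat[OF rep A], of "\<lambda>i. mat_vec d (\<rho> B) v i - v i", simplified mat_vec_diff])
  then show ?thesis
    using cnorm_diff_triangle[of d v "mat_vec d (\<rho> A) v" "mat_vec d (\<rho> (A ** B)) v"]
    by (simp add: displacement_def)
qed

lemma displacement_hyperedge_products:
  assumes rep: "unitary_rep d \<rho>" and v: "v \<in> cvec d"
    and gen: "\<And>B a. w B > 0 \<Longrightarrow> a \<in> U_sub B \<Longrightarrow> displacement d \<rho> v a \<le> s"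
  shows "g \<in> hyperedge_products w m \<Longrightarrow> displacement d \<rho> v g \<le> real m * s"
proof (induction m arbitrary: g)
  case 0
  then show ?case using displacement_one_mat[OF rep v] by simp
next
  case (Suc m)
  then obtain a h B where ah: "g = a ** h" "w B > 0" "a \<in> U_sub B" "h \<in> hyperedge_products w m"
    by auto
  have "a \<in> unitary_group" "h \<in> unitary_group"
    using ah(3,4) U_sub_subset_unitary_group hyperedge_products_subset_unitary_group by blast+
  then have "displacement d \<rho> v g \<le> displacement d \<rho> v a + displacement d \<rho> v h"
    unfolding ah(1) by (rule displacement_mult_le[OF rep])
  also have "\<dots> \<le> s + real m * s" using gen[OF ah(2,3)] Suc.IH[OF ah(4)] by simp
  finally show ?case by (simp add: algebra_simps)
qed

section \<open>Haar averages\<close>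

lemma haar_probD:
  assumes "haar_prob G \<mu>"
  shows "prob_space \<mu>" "space \<mu> = G" "sets \<mu> = sets (restrict_space borel G)"
    "\<And>g X. g \<in> G \<Longrightarrow> X \<in> sets \<mu> \<Longrightarrow> emeasure \<mu> ((\<lambda>A. g ** A) ` X) = emeasure \<mu> X"
  using assms unfolding haar_prob_def by auto

lemma haar_finite_measure: "haar_prob G \<mu> \<Longrightarrow> finite_measure \<mu>"
  using haar_probD(1) prob_space_def by blast

lemma haar_U_sub_space_unitary:
  "haar_prob (U_sub B) \<mu> \<Longrightarrow> A \<in> space \<mu> \<Longrightarrow> A \<in> unitary_group"
  using haar_probD(2) U_sub_subset_unitary_group by blast

lemma haar_measurable_continuous_on:
  fixes f :: "complex^'n^'n \<Rightarrow> 'b::topological_space"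
  assumes haar: "haar_prob (U_sub B) \<mu>" and f: "continuous_on unitary_group f"
  shows "f \<in> borel_measurable \<mu>"
proof -
  have "continuous_on (U_sub B) f" using f U_sub_subset_unitary_group by (rule continuous_on_subset)
  then have "f \<in> borel_measurable (restrict_space borel (U_sub B))"
    by (rule borel_measurable_continuous_on_restrict)
  then show ?thesis
    using haar_probD(3)[OF haar] by (simp cong: measurable_cong_sets)
qed

lemma haar_left_mult_measurable:
  assumes haar: "haar_prob (U_sub B) \<mu>" and a: "a \<in> U_sub B"
  shows "(\<lambda>A. a ** A) \<in> measurable \<mu> \<mu>"
proof -
  have "continuous_on (U_sub B) (\<lambda>A. a ** A)"
    unfolding matrix_matrix_mult_def by (intro continuous_intros)
  then have "(\<lambda>A. a ** A) \<in> measurable (restrict_space borel (U_sub B)) borel"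
    by (rule borel_measurable_continuous_on_restrict)
  moreover have "(\<lambda>A. a ** A) \<in> space (restrict_space borel (U_sub B)) \<rightarrow> U_sub B"
    using a by (auto simp: space_restrict_space mult_in_U_sub)
  ultimately have "(\<lambda>A. a ** A) \<in>
      measurable (restrict_space borel (U_sub B)) (restrict_space borel (U_sub B))"
    by (simp add: measurable_restrict_space2_iff)
  then show ?thesis
    using haar_probD(3)[OF haar] by (simp cong: measurable_cong_sets)
qed

lemma haar_distr_left_mult:
  assumes haar: "haar_prob (U_sub B) \<mu>" and a: "a \<in> U_sub B"
  shows "distr \<mu> \<mu> (\<lambda>A. a ** A) = \<mu>"
proof (rule measure_eqI)
  fix X assume "X \<in> sets (distr \<mu> \<mu> (\<lambda>A. a ** A))"
  then have X: "X \<in> sets \<mu>" by simp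
  then have XG: "X \<subseteq> U_sub B" using sets.sets_into_space haar_probD(2)[OF haar] by blast
  have ua: "cadj a ** a = one_mat" "a ** cadj a = one_mat" using a by (auto simp: U_sub_iff)
  have "(\<lambda>A. a ** A) -` X \<inter> space \<mu> = (\<lambda>A. cadj a ** A) ` X"
  proof
    show "(\<lambda>A. a ** A) -` X \<inter> space \<mu> \<subseteq> (\<lambda>A. cadj a ** A) ` X"
      using cadj_mult_cancel_left[OF ua(1)] by (metis (no_types, lifting) IntD1 image_eqI subsetI vimageE)
    show "(\<lambda>A. cadj a ** A) ` X \<subseteq> (\<lambda>A. a ** A) -` X \<inter> space \<mu>"
      using XG a haar_probD(2)[OF haar] cadj_mult_cancel_left[of "cadj a"] ua(2)
      by (auto intro: mult_in_U_sub cadj_in_U_sub)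
  qed
  then have "emeasure (distr \<mu> \<mu> (\<lambda>A. a ** A)) X = emeasure \<mu> ((\<lambda>A. cadj a ** A) ` X)"
    using emeasure_distr[OF haar_left_mult_measurable[OF haar a] X] by simp
  also have "\<dots> = emeasure \<mu> X" using haar_probD(4)[OF haar cadj_in_U_sub[OF a] X] .
  finally show "emeasure (distr \<mu> \<mu> (\<lambda>A. a ** A)) X = emeasure \<mu> X" .
qed simp

lemma haar_integral_left_mult:
  fixes f :: "complex^'n^'n \<Rightarrow> 'b::{banach, second_countable_topology}"
  assumes haar: "haar_prob (U_sub B) \<mu>" and a: "a \<in> U_sub B" and f: "f \<in> borel_measurable \<mu>"
  shows "(\<integral>A. f (a ** A) \<partial>\<mu>) = integral\<^sup>L \<mu> f"
  using integral_distr[OF haar_left_mult_measurable[OF haar a] f] haar_distr_left_mult[OF haar a]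
  by simp

lemma haar_integrable_left_mult:
  fixes f :: "complex^'n^'n \<Rightarrow> 'b::{banach, second_countable_topology}"
  assumes haar: "haar_prob (U_sub B) \<mu>" and a: "a \<in> U_sub B" and f: "integrable \<mu> f"
  shows "integrable \<mu> (\<lambda>A. f (a ** A))"
  using integrable_distr_eq[OF haar_left_mult_measurable[OF haar a] borel_measurable_integrable[OF f]]
    haar_distr_left_mult[OF haar a] f
  by simp

lemma unitary_rep_entry_integrable:
  assumes rep: "unitary_rep d \<rho>" and haar: "haar_prob (U_sub B) \<mu>" and ij: "i < d" "j < d"
  shows "integrable \<mu> (\<lambda>A. \<rho> A i j)"
proof (rule finite_measure.integrable_const_bound[OF haar_finite_measure[OF haar], where B = 1])
  show "AE A in \<mu>. norm (\<rho> A i j) \<le> 1"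
    using unitary_mat_entry_bound[OF unitary_rep_unitary_mat[OF rep] ij]
      haar_U_sub_space_unitary[OF haar] by auto
  show "(\<lambda>A. \<rho> A i j) \<in> borel_measurable \<mu>"
    using rep ij by (intro haar_measurable_continuous_on[OF haar]) (simp add: unitary_rep_def)
qed

lemma cinner_unitary_rep_integrable:
  assumes "unitary_rep d \<rho>" "haar_prob (U_sub B) \<mu>"
  shows "integrable \<mu> (\<lambda>A. cinner d (mat_vec d (\<rho> A) x) y)"
  unfolding cinner_mat_vec_left using assms
  by (intro Bochner_Integration.integrable_sum Bochner_Integration.integrable_mult_left
      unitary_rep_entry_integrable) auto

definition rep_average :: "(complex^'n^'n) measure \<Rightarrow> (complex^'n^'n \<Rightarrow> cmat) \<Rightarrow> cmat" where
  "rep_average \<mu> \<rho> = (\<lambda>i j. \<integral>A. \<rho> A i j \<partial>\<mu>)"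

lemma cinner_rep_average:
  assumes rep: "unitary_rep d \<rho>" and haar: "haar_prob (U_sub B) \<mu>"
  shows "cinner d (mat_vec d (rep_average \<mu> \<rho>) x) y = (\<integral>A. cinner d (mat_vec d (\<rho> A) x) y \<partial>\<mu>)"
proof -
  have int: "integrable \<mu> (\<lambda>A. \<rho> A i j * c)" if "i < d" "j < d" for i j c
    using unitary_rep_entry_integrable[OF rep haar that] by simp
  have "(\<integral>A. cinner d (mat_vec d (\<rho> A) x) y \<partial>\<mu>) =
      (\<Sum>i<d. \<integral>A. (\<Sum>j<d. \<rho> A i j * (x j * cnj (y i))) \<partial>\<mu>)"
    unfolding cinner_mat_vec_left
    by (rule Bochner_Integration.integral_sum)
      (use int in \<open>auto intro!: Bochner_Integration.integrable_sum\<close>)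
  also have "\<dots> = (\<Sum>i<d. \<Sum>j<d. \<integral>A. \<rho> A i j * (x j * cnj (y i)) \<partial>\<mu>)"
    by (intro sum.cong refl Bochner_Integration.integral_sum) (use int in auto)
  finally show ?thesis
    by (simp add: cinner_mat_vec_left rep_average_def)
qed

lemma rep_average_left_invariant:
  assumes rep: "unitary_rep d \<rho>" and haar: "haar_prob (U_sub B) \<mu>" and a: "a \<in> U_sub B"
  shows "mat_vec d (\<rho> a) (mat_vec d (rep_average \<mu> \<rho>) x) = mat_vec d (rep_average \<mu> \<rho>) x"
proof -
  have aU: "a \<in> unitary_group" using a U_sub_subset_unitary_group by auto
  have "mat_mul d (\<rho> a) (rep_average \<mu> \<rho>) i j = rep_average \<mu> \<rho> i j" if ij: "i < d" "j < d" for i j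
  proof -
    have "mat_mul d (\<rho> a) (rep_average \<mu> \<rho>) i j = (\<integral>A. (\<Sum>k<d. \<rho> a i k * \<rho> A k j) \<partial>\<mu>)"
      using unitary_rep_entry_integrable[OF rep haar] ij
      by (simp add: mat_mul_def rep_average_def Bochner_Integration.integral_sum)
    also have "\<dots> = (\<integral>A. \<rho> (a ** A) i j \<partial>\<mu>)"
      using rep aU ij haar_U_sub_space_unitary[OF haar]
      by (intro Bochner_Integration.integral_cong) (simp_all add: unitary_rep_def mat_mul_def)
    also have "\<dots> = rep_average \<mu> \<rho> i j"
      using haar_integral_left_mult[OF haar a
          borel_measurable_integrable[OF unitary_rep_entry_integrable[OF rep haar ij]]]
      by (simp add: rep_average_def)
    finally show ?thesis .
  qed
  then show ?thesis by (simp add: mat_vec_mat_mul[symmetric] cong: mat_vec_cong)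
qed

lemma Im_cinner_rep_average:
  assumes rep: "unitary_rep d \<rho>" and haar: "haar_prob (U_sub B) \<mu>"
  shows "Im (cinner d (mat_vec d (rep_average \<mu> \<rho>) v) v) = 0"
proof -
  define u where "u = mat_vec d (rep_average \<mu> \<rho>) v"
  have "cinner d u u = (\<integral>A. cinner d (mat_vec d (\<rho> A) v) u \<partial>\<mu>)"
    unfolding u_def by (rule cinner_rep_average[OF rep haar])
  also have "\<dots> = (\<integral>A. cinner d v u \<partial>\<mu>)"
  proof (rule Bochner_Integration.integral_cong[OF refl])
    fix A assume A: "A \<in> space \<mu>"
    then have "mat_vec d (\<rho> A) u = u"
      using haar_probD(2)[OF haar] rep_average_left_invariant[OF rep haar] by (simp add: u_def)
    then show "cinner d (mat_vec d (\<rho> A) v) u = cinner d v u"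
      using unitary_mat_cinner[OF unitary_rep_unitary_mat[OF rep haar_U_sub_space_unitary[OF haar A]]]
      by metis
  qed
  also have "\<dots> = cinner d v u" using prob_space.prob_space[OF haar_probD(1)[OF haar]] by simp
  finally have "cinner d u (\<lambda>i. v i - u i) = 0"
    by (subst cinner_commute) (simp add: cinner_diff_left)
  then have "cinner d u v = complex_of_real (cnorm_sq d u)"
    by (simp add: cinner_diff_right cinner_self)
  then show ?thesis by (simp add: u_def)
qed

definition displacement_energy ::
    "(complex^'n^'n) measure \<Rightarrow> (complex^'n^'n \<Rightarrow> cmat) \<Rightarrow> nat \<Rightarrow> cvect \<Rightarrow> real" where
  "displacement_energy \<mu> \<rho> d v = (\<integral>A. (displacement d \<rho> v A)\<^sup>2 \<partial>\<mu>)"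

lemma displacement_energy_nonneg: "displacement_energy \<mu> \<rho> d v \<ge> 0"
  unfolding displacement_energy_def by (rule Bochner_Integration.integral_nonneg) simp

lemma displacement_power2_integrable:
  assumes rep: "unitary_rep d \<rho>" and haar: "haar_prob (U_sub B) \<mu>"
  shows "integrable \<mu> (\<lambda>A. (displacement d \<rho> v A)\<^sup>2)"
proof -
  have "integrable \<mu> (\<lambda>A. 2 * cnorm_sq d v - 2 * Re (cinner d (mat_vec d (\<rho> A) v) v))"
    using cinner_unitary_rep_integrable[OF rep haar]
      finite_measure.integrable_const[OF haar_finite_measure[OF haar]]
    by (intro Bochner_Integration.integrable_diff Bochner_Integration.integrable_mult_right
        integrable_Re)
  then show ?thesis
    using displacement_power2[OF rep haar_U_sub_space_unitary[OF haar]]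
    by (simp cong: Bochner_Integration.integrable_cong)
qed

lemma displacement_energy_eq:
  assumes rep: "unitary_rep d \<rho>" and haar: "haar_prob (U_sub B) \<mu>"
  shows "displacement_energy \<mu> \<rho> d v =
    2 * cnorm_sq d v - 2 * Re (cinner d (mat_vec d (rep_average \<mu> \<rho>) v) v)"
proof -
  have "displacement_energy \<mu> \<rho> d v =
      (\<integral>A. 2 * cnorm_sq d v - 2 * Re (cinner d (mat_vec d (\<rho> A) v) v) \<partial>\<mu>)"
    unfolding displacement_energy_def
    using displacement_power2[OF rep haar_U_sub_space_unitary[OF haar]]
    by (simp cong: Bochner_Integration.integral_cong)
  also have "\<dots> = 2 * cnorm_sq d v - 2 * (\<integral>A. Re (cinner d (mat_vec d (\<rho> A) v) v) \<partial>\<mu>)"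
    using cinner_unitary_rep_integrable[OF rep haar]
      finite_measure.integrable_const[OF haar_finite_measure[OF haar]]
      prob_space.prob_space[OF haar_probD(1)[OF haar]]
    by (subst Bochner_Integration.integral_diff) auto
  also have "\<dots> = 2 * cnorm_sq d v - 2 * Re (cinner d (mat_vec d (rep_average \<mu> \<rho>) v) v)"
    using integral_Re[OF cinner_unitary_rep_integrable[OF rep haar]] cinner_rep_average[OF rep haar]
    by simp
  finally show ?thesis .
qed

text \<open>Average the triangle inequality \<open>D a \<le> D (a b) + D b\<close> over \<open>b \<in> U_B\<close>; left
  invariance of \<open>\<mu>\<close> turns the average of \<open>D (a b)\<^sup>2\<close> into the energy itself.\<close>

lemma displacement_power2_le_energy:
  assumes rep: "unitary_rep d \<rho>" and haar: "haar_prob (U_sub B) \<mu>" and a: "a \<in> U_sub B"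
  shows "(displacement d \<rho> v a)\<^sup>2 \<le> 4 * displacement_energy \<mu> \<rho> d v"
proof -
  let ?D = "displacement d \<rho> v"
  have aU: "a \<in> unitary_group" using a U_sub_subset_unitary_group by auto
  have I1: "integrable \<mu> (\<lambda>b. (?D b)\<^sup>2)" by (rule displacement_power2_integrable[OF rep haar])
  have I2: "integrable \<mu> (\<lambda>b. (?D (a ** b))\<^sup>2)" by (rule haar_integrable_left_mult[OF haar a I1])
  have pointwise: "(?D a)\<^sup>2 \<le> 2 * (?D (a ** b))\<^sup>2 + 2 * (?D b)\<^sup>2" if "b \<in> space \<mu>" for b
  proof -
    have "?D a \<le> ?D (a ** b) + ?D b"
      using displacement_le_mult[OF rep aU haar_U_sub_space_unitary[OF haar that]] .
    then have "(?D a)\<^sup>2 \<le> (?D (a ** b) + ?D b)\<^sup>2"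
      using displacement_nonneg by (intro power_mono) auto
    then show ?thesis
      using sum_squares_bound[of "?D (a ** b)" "?D b"] by (simp add: power2_sum)
  qed
  have "(?D a)\<^sup>2 = (\<integral>b. (?D a)\<^sup>2 \<partial>\<mu>)"
    using prob_space.prob_space[OF haar_probD(1)[OF haar]] by simp
  also have "\<dots> \<le> (\<integral>b. 2 * (?D (a ** b))\<^sup>2 + 2 * (?D b)\<^sup>2 \<partial>\<mu>)"
    using I1 I2 pointwise finite_measure.integrable_const[OF haar_finite_measure[OF haar]]
    by (intro Bochner_Integration.integral_mono) auto
  also have "\<dots> = 2 * (\<integral>b. (?D (a ** b))\<^sup>2 \<partial>\<mu>) + 2 * displacement_energy \<mu> \<rho> d v"
    using I1 I2 by (simp add: displacement_energy_def)
  also have "\<dots> = 4 * displacement_energy \<mu> \<rho> d v"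
    using haar_integral_left_mult[OF haar a borel_measurable_integrable[OF I1]]
    by (simp add: displacement_energy_def)
  finally show ?thesis .
qed

lemma displacement_energy_le:
  assumes rep: "unitary_rep d \<rho>" and haar: "haar_prob (U_sub B) \<mu>"
    and bound: "\<And>A. A \<in> unitary_group \<Longrightarrow> (displacement d \<rho> v A)\<^sup>2 \<le> K"
  shows "displacement_energy \<mu> \<rho> d v \<le> K"
  unfolding displacement_energy_def
  using haar_U_sub_space_unitary[OF haar] bound
  by (intro prob_space.integral_le_const[OF haar_probD(1)[OF haar]
        displacement_power2_integrable[OF rep haar]] AE_I2) auto

lemma mat_vec_laplacian:
  assumes v: "v \<in> cvec d" and i: "i < d"
  shows "mat_vec d (laplacian w \<mu> \<rho>) v i =
     (\<Sum>B\<in>UNIV. complex_of_real (w B) * (v i - mat_vec d (rep_average (\<mu> B) \<rho>) v i))"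
proof -
  have "laplacian w \<mu> \<rho> i j * v j = (\<Sum>B\<in>UNIV. complex_of_real (w B) *
      (id_mat i j * v j - rep_average (\<mu> B) \<rho> i j * v j))" for j
    unfolding laplacian_def rep_average_def sum_distrib_right
    by (rule sum.cong[OF refl]) (simp add: algebra_simps)
  then have "mat_vec d (laplacian w \<mu> \<rho>) v i =
      (\<Sum>j<d. \<Sum>B\<in>UNIV. complex_of_real (w B) * (id_mat i j * v j - rep_average (\<mu> B) \<rho> i j * v j))"
    using i by (simp add: mat_vec_def)
  also have "\<dots> = (\<Sum>B\<in>UNIV. complex_of_real (w B) *
      ((\<Sum>j<d. id_mat i j * v j) - (\<Sum>j<d. rep_average (\<mu> B) \<rho> i j * v j)))"
    by (subst sum.swap) (simp add: right_diff_distrib sum_distrib_left sum_subtractf mult.assoc)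
  also have "\<dots> = (\<Sum>B\<in>UNIV. complex_of_real (w B) * (v i - mat_vec d (rep_average (\<mu> B) \<rho>) v i))"
  proof -
    have "(\<Sum>j<d. id_mat i j * v j) = v i"
      using fun_cong[OF mat_vec_id_mat[OF v], of i] i by (simp add: mat_vec_def)
    then show ?thesis using i by (simp add: mat_vec_def)
  qed
  finally show ?thesis .
qed

lemma cinner_laplacian:
  assumes v: "v \<in> cvec d"
  shows "cinner d (mat_vec d (laplacian w \<mu> \<rho>) v) v =
     (\<Sum>B\<in>UNIV. complex_of_real (w B) *
        (cinner d v v - cinner d (mat_vec d (rep_average (\<mu> B) \<rho>) v) v))"
proof -
  have "cinner d (mat_vec d (laplacian w \<mu> \<rho>) v) v =
      (\<Sum>i<d. \<Sum>B\<in>UNIV. complex_of_real (w B) *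
         ((v i - mat_vec d (rep_average (\<mu> B) \<rho>) v i) * cnj (v i)))"
    unfolding cinner_def by (intro sum.cong refl) (simp add: mat_vec_laplacian[OF v] sum_distrib_right mult.assoc)
  also have "\<dots> = (\<Sum>B\<in>UNIV. complex_of_real (w B) *
      (\<Sum>i<d. (v i - mat_vec d (rep_average (\<mu> B) \<rho>) v i) * cnj (v i)))"
    by (subst sum.swap) (simp add: sum_distrib_left)
  finally show ?thesis
    by (simp add: cinner_def sum_subtractf left_diff_distrib)
qed

lemma Im_cinner_laplacian:
  assumes rep: "unitary_rep d \<rho>" and haar: "\<And>B. haar_prob (U_sub B) (\<mu> B)" and v: "v \<in> cvec d"
  shows "Im (cinner d (mat_vec d (laplacian w \<mu> \<rho>) v) v) = 0"
  by (simp add: cinner_laplacian[OF v] Im_sum cinner_self Im_cinner_rep_average[OF rep haar])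

lemma Re_cinner_laplacian:
  assumes rep: "unitary_rep d \<rho>" and haar: "\<And>B. haar_prob (U_sub B) (\<mu> B)" and v: "v \<in> cvec d"
  shows "Re (cinner d (mat_vec d (laplacian w \<mu> \<rho>) v) v) =
    (\<Sum>B\<in>UNIV. w B * displacement_energy (\<mu> B) \<rho> d v) / 2"
proof -
  have "Re (cinner d (mat_vec d (laplacian w \<mu> \<rho>) v) v) = (\<Sum>B\<in>UNIV. w B *
      (cnorm_sq d v - Re (cinner d (mat_vec d (rep_average (\<mu> B) \<rho>) v) v)))"
    by (simp add: cinner_laplacian[OF v] Re_sum cinner_self)
  also have "\<dots> = (\<Sum>B\<in>UNIV. w B * displacement_energy (\<mu> B) \<rho> d v / 2)"
    by (intro sum.cong refl) (simp add: displacement_energy_eq[OF rep haar] algebra_simps)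
  finally show ?thesis by (simp add: sum_divide_distrib)
qed

lemma csubspace_of_mat_vec_image: "csubspace_of d (mat_vec d M ` cvec d)"
  unfolding csubspace_of_def
proof (intro conjI ballI allI)
  show "mat_vec d M ` cvec d \<subseteq> cvec d" using mat_vec_in_cvec by blast
  have "(\<lambda>_. 0) \<in> cvec d" by (simp add: cvec_def)
  then have "mat_vec d M (\<lambda>_. 0) \<in> mat_vec d M ` cvec d" by (rule imageI)
  then show "(\<lambda>_. 0) \<in> mat_vec d M ` cvec d" by (simp only: mat_vec_zero)
next
  fix x y assume "x \<in> mat_vec d M ` cvec d" "y \<in> mat_vec d M ` cvec d"
  then obtain x' y' where "x' \<in> cvec d" "y' \<in> cvec d" "x = mat_vec d M x'" "y = mat_vec d M y'"
    by blast
  then have sum: "(\<lambda>i. x' i + y' i) \<in> cvec d"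
    and eq: "(\<lambda>i. x i + y i) = mat_vec d M (\<lambda>i. x' i + y' i)"
    by (simp_all add: cvec_def mat_vec_add)
  from sum show "(\<lambda>i. x i + y i) \<in> mat_vec d M ` cvec d" unfolding eq by (rule imageI)
next
  fix c x assume "x \<in> mat_vec d M ` cvec d"
  then obtain x' where "x' \<in> cvec d" "x = mat_vec d M x'" by blast
  then have scaled: "(\<lambda>i. c * x' i) \<in> cvec d"
    and eq: "(\<lambda>i. c * x i) = mat_vec d M (\<lambda>i. c * x' i)"
    by (simp_all add: cvec_def mat_vec_scale)
  from scaled show "(\<lambda>i. c * x i) \<in> mat_vec d M ` cvec d" unfolding eq by (rule imageI)
qed

lemma irreducible_rep_invariant_subspace:
  assumes "irreducible_rep d \<rho>" "csubspace_of d W"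
    "\<And>A u. A \<in> unitary_group \<Longrightarrow> u \<in> W \<Longrightarrow> mat_vec d (\<rho> A) u \<in> W"
  shows "W = {\<lambda>_. 0} \<or> W = cvec d"
  using assms unfolding irreducible_rep_def by blast

lemma irreducible_rep_trivial_if_fixes_all:
  assumes irr: "irreducible_rep d \<rho>"
    and fixed: "\<And>A u. A \<in> unitary_group \<Longrightarrow> u \<in> cvec d \<Longrightarrow> mat_vec d (\<rho> A) u = u"
  shows "trivial_rep d \<rho>"
proof -
  have "d > 0" using irr by (simp add: irreducible_rep_def unitary_rep_def)
  define e0 :: cvect where "e0 = (\<lambda>i. if i = 0 then 1 else 0)"
  have "d = 1"
  proof (rule ccontr)
    assume "d \<noteq> 1"
    define W where "W = {u :: cvect. \<forall>i. i \<noteq> 0 \<longrightarrow> u i = 0}"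
    have "W \<subseteq> cvec d" using \<open>d > 0\<close> by (auto simp: W_def cvec_def)
    then have "csubspace_of d W" by (auto simp: csubspace_of_def W_def)
    then have "W = {\<lambda>_. 0} \<or> W = cvec d"
      using \<open>W \<subseteq> cvec d\<close> fixed by (intro irreducible_rep_invariant_subspace[OF irr]) auto
    moreover have "e0 \<in> W - {\<lambda>_. 0}" by (auto simp: W_def e0_def fun_eq_iff)
    moreover have "(\<lambda>i. if i = 1 then 1 else 0) \<in> cvec d - W"
      using \<open>d > 0\<close> \<open>d \<noteq> 1\<close> by (auto simp: cvec_def W_def)
    ultimately show False by blast
  qed
  moreover have "\<rho> A 0 0 = 1" if "A \<in> unitary_group" for A
  proof -
    have "mat_vec d (\<rho> A) e0 0 = e0 0"
      using fixed[OF that, of e0] \<open>d = 1\<close> by (simp add: cvec_def e0_def)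
    then show ?thesis using \<open>d = 1\<close> by (simp add: mat_vec_def e0_def)
  qed
  ultimately show ?thesis by (simp add: trivial_rep_def)
qed

text \<open>The range of the average over \<open>U(n)\<close> is an invariant subspace of fixed vectors,
  so by irreducibility it is either zero or everything, and the latter forces triviality.\<close>

lemma rep_average_UNIV_eq_0:
  assumes irr: "irreducible_rep d \<rho>" and nt: "\<not> trivial_rep d \<rho>"
    and haar: "haar_prob (U_sub UNIV) \<mu>" and v: "v \<in> cvec d"
  shows "mat_vec d (rep_average \<mu> \<rho>) v = (\<lambda>_. 0)"
proof -
  have rep: "unitary_rep d \<rho>" using irr by (simp add: irreducible_rep_def)
  define W where "W = mat_vec d (rep_average \<mu> \<rho>) ` cvec d"
  have fixW: "mat_vec d (\<rho> A) u = u" if "A \<in> unitary_group" "u \<in> W" for A u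
    using that rep_average_left_invariant[OF rep haar] by (auto simp: W_def U_sub_UNIV)
  have "W = {\<lambda>_. 0} \<or> W = cvec d"
    unfolding W_def using fixW
    by (intro irreducible_rep_invariant_subspace[OF irr csubspace_of_mat_vec_image])
      (simp add: W_def)
  moreover have "W \<noteq> cvec d"
  proof
    assume "W = cvec d"
    then have "trivial_rep d \<rho>"
      using fixW by (intro irreducible_rep_trivial_if_fixes_all[OF irr]) simp
    with nt show False ..
  qed
  moreover have "mat_vec d (rep_average \<mu> \<rho>) v \<in> W" using v by (simp add: W_def)
  ultimately show ?thesis by simp
qed

definition cmat_to_mat :: "nat \<Rightarrow> cmat \<Rightarrow> complex Matrix.mat" where
  "cmat_to_mat d M = Matrix.mat d d (\<lambda>(i, j). M i j)"

lemma cmat_to_mat_carrier: "cmat_to_mat d M \<in> carrier_mat d d"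
  by (simp add: cmat_to_mat_def)

lemma cmat_to_mat_mult_vec:
  "i < d \<Longrightarrow> Matrix.vec_index (cmat_to_mat d M *\<^sub>v Matrix.vec d v) i = mat_vec d M v i"
  by (simp add: cmat_to_mat_def mat_vec_def scalar_prod_def atLeast0LessThan)

lemma is_eigenvalue_iff_spectrum: "is_eigenvalue d M k \<longleftrightarrow> k \<in> spectrum (cmat_to_mat d M)"
proof
  assume "is_eigenvalue d M k"
  then obtain v where v: "v \<in> cvec d" "v \<noteq> (\<lambda>_. 0)" "mat_vec d M v = (\<lambda>i. k * v i)"
    by (auto simp: is_eigenvalue_def)
  have "Matrix.vec d v \<noteq> 0\<^sub>v d"
    using v(1,2) by (auto simp: cvec_def fun_eq_iff Matrix.vec_eq_iff) (metis not_le)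
  moreover have "cmat_to_mat d M *\<^sub>v Matrix.vec d v = k \<cdot>\<^sub>v Matrix.vec d v"
    using v(3) by (intro eq_vecI) (auto simp: cmat_to_mat_mult_vec, simp add: cmat_to_mat_def)
  ultimately show "k \<in> spectrum (cmat_to_mat d M)"
    unfolding spectrum_def eigenvalue_def eigenvector_def
    by (auto simp: cmat_to_mat_def intro!: exI[of _ "Matrix.vec d v"])
next
  assume "k \<in> spectrum (cmat_to_mat d M)"
  then obtain x where x: "x \<in> carrier_vec d" "x \<noteq> 0\<^sub>v d" "cmat_to_mat d M *\<^sub>v x = k \<cdot>\<^sub>v x"
    unfolding spectrum_def eigenvalue_def eigenvector_def by (auto simp: cmat_to_mat_def)
  define v where "v = (\<lambda>i. if i < d then Matrix.vec_index x i else 0)"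
  have x_eq: "x = Matrix.vec d v"
    using x(1) by (intro eq_vecI) (auto simp: v_def)
  have "v \<in> cvec d" by (simp add: v_def cvec_def)
  moreover have "v \<noteq> (\<lambda>_. 0)"
    using x(2) x_eq by (auto simp: zero_vec_def)
  moreover have "mat_vec d M v = (\<lambda>i. k * v i)"
  proof
    fix i
    have eq: "cmat_to_mat d M *\<^sub>v Matrix.vec d v = k \<cdot>\<^sub>v Matrix.vec d v"
      using x(3) x_eq by simp
    show "mat_vec d M v i = k * v i"
    proof (cases "i < d")
      case True
      then show ?thesis
        using arg_cong[OF eq, of "\<lambda>y. Matrix.vec_index y i"] by (simp add: cmat_to_mat_mult_vec)
    qed (simp add: mat_vec_def v_def)
  qed
  ultimately show "is_eigenvalue d M k" by (auto simp: is_eigenvalue_def)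
qed

lemma cinner_eigenvector:
  "mat_vec d M v = (\<lambda>i. k * v i) \<Longrightarrow> cinner d (mat_vec d M v) v = k * complex_of_real (cnorm_sq d v)"
  by (simp add: cinner_scale_left cinner_self)

text \<open>\<^const>\<open>lambda_min\<close> is a \<open>Min\<close> over the real eigenvalues, meaningless unless that set
  is finite and nonempty: finiteness comes from the spectrum of the corresponding
  \<open>Matrix.mat\<close>, nonemptiness from eigenvalues being real when the quadratic form is.\<close>

lemma lambda_min_ge:
  assumes d: "d > 0"
    and real: "\<And>v. v \<in> cvec d \<Longrightarrow> Im (cinner d (mat_vec d M v) v) = 0"
    and bound: "\<And>x. is_eigenvalue d M (complex_of_real x) \<Longrightarrow> \<epsilon> \<le> x"
  shows "\<epsilon> \<le> lambda_min d M"
proof -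
  define E where "E = {x::real. is_eigenvalue d M (complex_of_real x)}"
  have "E \<subseteq> Re ` spectrum (cmat_to_mat d M)"
    by (force simp: E_def is_eigenvalue_iff_spectrum)
  moreover have "finite (Re ` spectrum (cmat_to_mat d M))"
    using card_finite_spectrum(1)[OF cmat_to_mat_carrier] by simp
  ultimately have "finite E" by (rule finite_subset)
  obtain k where k: "is_eigenvalue d M k"
    using spectrum_non_empty[OF cmat_to_mat_carrier d] is_eigenvalue_iff_spectrum by blast
  then obtain v where v: "v \<in> cvec d" "v \<noteq> (\<lambda>_. 0)" "mat_vec d M v = (\<lambda>i. k * v i)"
    unfolding is_eigenvalue_def by blast
  have "Im k * cnorm_sq d v = 0"
    using real[OF v(1)] cinner_eigenvector[OF v(3)] by simp
  then have "k = complex_of_real (Re k)"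
    using cnorm_sq_pos[OF v(1,2)] by (simp add: complex_eq_iff)
  then have "Re k \<in> E" using k unfolding E_def by (metis mem_Collect_eq)
  then have "E \<noteq> {}" by blast
  with \<open>finite E\<close> have "Min E \<in> E" by (rule Min_in)
  then show ?thesis using bound by (simp add: lambda_min_def E_def)
qed

lemma lambda_min_ge_of_form_bound:
  assumes d: "d > 0" and c: "c > 0" and K: "K \<ge> 0"
    and real: "\<And>v. v \<in> cvec d \<Longrightarrow> Im (cinner d (mat_vec d M v) v) = 0"
    and form: "\<And>v. v \<in> cvec d \<Longrightarrow> c * cnorm_sq d v \<le> K * Re (cinner d (mat_vec d M v) v)"
  shows "c / (K + 1) \<le> lambda_min d M"
proof (rule lambda_min_ge[OF d real])
  fix x assume "is_eigenvalue d M (complex_of_real x)"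
  then obtain v where v: "v \<in> cvec d" "v \<noteq> (\<lambda>_. 0)" "mat_vec d M v = (\<lambda>i. complex_of_real x * v i)"
    unfolding is_eigenvalue_def by blast
  have "c * cnorm_sq d v \<le> (K * x) * cnorm_sq d v"
    using form[OF v(1)] cinner_eigenvector[OF v(3)] by simp
  then have cx: "c \<le> K * x" using cnorm_sq_pos[OF v(1,2)] by simp
  have "x > 0"
  proof (rule ccontr)
    assume "\<not> x > 0"
    then have "K * x \<le> 0" using K by (simp add: mult_nonneg_nonpos)
    with cx c show False by linarith
  qed
  with cx have "c \<le> (K + 1) * x" by (simp add: algebra_simps)
  then show "c / (K + 1) \<le> x" using K by (simp add: pos_divide_le_eq mult.commute)
qed

lemma positive_values_bounded_below:
  fixes w :: "'a::finite \<Rightarrow> real"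
  shows "\<exists>c>0. \<forall>B. w B > 0 \<longrightarrow> c \<le> w B"
proof (cases "\<exists>B. w B > 0")
  case True
  let ?W = "w ` {B. w B > 0}"
  have "finite ?W" "?W \<noteq> {}" using True by auto
  then have "Min ?W \<in> ?W" by (rule Min_in)
  then have "Min ?W > 0" by auto
  moreover have "\<forall>B. w B > 0 \<longrightarrow> Min ?W \<le> w B" using \<open>finite ?W\<close> by (auto intro: Min_le)
  ultimately show ?thesis by blast
qed (auto intro: exI[of _ 1])

lemma displacement_power2_le_total_energy:
  fixes w :: "'n::finite set \<Rightarrow> real"
  assumes nonneg: "\<And>B. w B \<ge> 0" and haar: "\<And>B. haar_prob (U_sub B) (\<mu> B)"
    and gen: "unitary_group \<subseteq> hyperedge_products w N"
    and c: "c > 0" "\<And>B. w B > 0 \<Longrightarrow> c \<le> w B"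
    and rep: "unitary_rep d \<rho>" and v: "v \<in> cvec d" and g: "g \<in> unitary_group"
  shows "(displacement d \<rho> v g)\<^sup>2 \<le>
    (real N)\<^sup>2 * (4 * (\<Sum>B\<in>UNIV. w B * displacement_energy (\<mu> B) \<rho> d v) / c)"
proof -
  define T where "T = (\<Sum>B\<in>UNIV. w B * displacement_energy (\<mu> B) \<rho> d v)"
  have T0: "T \<ge> 0"
    unfolding T_def using nonneg displacement_energy_nonneg by (intro sum_nonneg mult_nonneg_nonneg)
  have "(displacement d \<rho> v a)\<^sup>2 \<le> 4 * T / c" if "w B > 0" "a \<in> U_sub B" for B a
  proof -
    have "c * (displacement d \<rho> v a)\<^sup>2 \<le> c * (4 * displacement_energy (\<mu> B) \<rho> d v)"
      using displacement_power2_le_energy[OF rep haar that(2)] c(1) by simp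
    also have "\<dots> \<le> 4 * (w B * displacement_energy (\<mu> B) \<rho> d v)"
      using mult_right_mono[OF c(2)[OF that(1)] displacement_energy_nonneg] by simp
    also have "\<dots> \<le> 4 * T"
      unfolding T_def
      by (simp, rule member_le_sum) (simp_all add: mult_nonneg_nonneg nonneg displacement_energy_nonneg)
    finally show ?thesis using c(1) by (simp add: field_simps)
  qed
  then have "displacement d \<rho> v g \<le> real N * sqrt (4 * T / c)"
    using displacement_hyperedge_products[OF rep v] gen g by (blast intro: real_le_rsqrt)
  then have "(displacement d \<rho> v g)\<^sup>2 \<le> (real N * sqrt (4 * T / c))\<^sup>2"
    using displacement_nonneg by (intro power_mono) auto
  also have "\<dots> = (real N)\<^sup>2 * (4 * T / c)"
    using T0 c(1) by (simp add: power_mult_distrib)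
  finally show ?thesis by (simp add: T_def)
qed

lemma cnorm_sq_le_cinner_laplacian:
  fixes w :: "'n::finite set \<Rightarrow> real"
  assumes nonneg: "\<And>B. w B \<ge> 0" and haar: "\<And>B. haar_prob (U_sub B) (\<mu> B)"
    and gen: "unitary_group \<subseteq> hyperedge_products w N"
    and c: "c > 0" "\<And>B. w B > 0 \<Longrightarrow> c \<le> w B"
    and irr: "irreducible_rep d \<rho>" and nt: "\<not> trivial_rep d \<rho>" and v: "v \<in> cvec d"
  shows "c * cnorm_sq d v \<le> 4 * (real N)\<^sup>2 * Re (cinner d (mat_vec d (laplacian w \<mu> \<rho>) v) v)"
proof -
  have rep: "unitary_rep d \<rho>" using irr by (simp add: irreducible_rep_def)
  define T where "T = (\<Sum>B\<in>UNIV. w B * displacement_energy (\<mu> B) \<rho> d v)"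
  have "2 * cnorm_sq d v = displacement_energy (\<mu> UNIV) \<rho> d v"
    using displacement_energy_eq[OF rep haar] rep_average_UNIV_eq_0[OF irr nt haar v]
    by (simp add: cinner_def)
  also have "\<dots> \<le> (real N)\<^sup>2 * (4 * T / c)"
    unfolding T_def
    by (rule displacement_energy_le[OF rep haar displacement_power2_le_total_energy[OF nonneg haar gen c rep v]])
  finally have "c * cnorm_sq d v \<le> 2 * (real N)\<^sup>2 * T"
    using c(1) by (simp add: field_simps)
  also have "T = 2 * Re (cinner d (mat_vec d (laplacian w \<mu> \<rho>) v) v)"
    unfolding T_def by (simp add: Re_cinner_laplacian[OF rep haar v])
  finally show ?thesis by simp
qed

theorem proposition5p2:
  fixes w :: "'n::finite set \<Rightarrow> real"
    and \<mu> :: "'n set \<Rightarrow> (complex^'n^'n) measure"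
  assumes n2: "CARD('n) \<ge> 2"
    and nonneg: "\<And>B. w B \<ge> 0"
    and conn: "hypergraph_connected w"
    and haar: "\<And>B. haar_prob (U_sub B) (\<mu> B)"
  shows "\<exists>\<epsilon>>0. \<forall>(d::nat) (\<rho> :: complex^'n^'n \<Rightarrow> cmat).
           irreducible_rep d \<rho> \<and> \<not> trivial_rep d \<rho> \<longrightarrow>
           lambda_min d (laplacian w \<mu> \<rho>) \<ge> \<epsilon>"
proof -
  obtain N where gen: "unitary_group \<subseteq> hyperedge_products w N"
    using unitary_group_subset_hyperedge_products[OF n2 conn] by blast
  obtain c where c: "c > 0" "\<And>B. w B > 0 \<Longrightarrow> c \<le> w B"
    using positive_values_bounded_below[of w] by blast
  have "c / (4 * (real N)\<^sup>2 + 1) \<le> lambda_min d (laplacian w \<mu> \<rho>)"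
    if irr: "irreducible_rep d \<rho>" and nt: "\<not> trivial_rep d \<rho>" for d \<rho>
  proof (rule lambda_min_ge_of_form_bound)
    have rep: "unitary_rep d \<rho>" using irr by (simp add: irreducible_rep_def)
    then show "d > 0" by (simp add: unitary_rep_def)
    show "Im (cinner d (mat_vec d (laplacian w \<mu> \<rho>) v) v) = 0" if "v \<in> cvec d" for v
      by (rule Im_cinner_laplacian[OF rep haar that])
    show "c * cnorm_sq d v \<le> 4 * (real N)\<^sup>2 * Re (cinner d (mat_vec d (laplacian w \<mu> \<rho>) v) v)"
      if "v \<in> cvec d" for v
      by (rule cnorm_sq_le_cinner_laplacian[OF nonneg haar gen c irr nt that])
  qed (use c in auto)
  moreover have "c / (4 * (real N)\<^sup>2 + 1) > 0" using c(1) by (simp add: add_nonneg_pos)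
  ultimately show ?thesis by blast
qed

end
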